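(* Consider the SemiFree Magnetic Tower of Hanoi with $N\ge1$ disks: posts $S$, $D$, $I$, where every disk lying on $S$ must have its Red face up, every disk lying on $D$ must have its Blue face up, and $I$ is initially empty and unconstrained; the $N$ disks start on $S$ (Red face up, decreasing size bottom to top) and must be transferred to $D$. This can be done in $S_{SF}(N)$ moves, where $$S_{SF}(N)=(3^{N-1}+N-1)+\frac{3^{N-1}-1}{8}-\frac{N-1}{2}\quad (N\text{ odd}),\qquad S_{SF}(N)=(3^{N-1}+N-1)+\frac{3^{N-1}-3}{8}-\frac{N-2}{2}\quad (N\text{ even}),$$ by a solution in which disk $k$ (disks numbered $1,\dots,N$ from largest to smallest) moves $$P_{SF}(k)=2\cdot3^{k-2}+\frac{3^{k-1}-9}{8}-\frac{3^{k-2}-3}{8}+1\ (k\text{ odd}),\qquad P_{SF}(k)=2\cdot3^{k-2}+\frac{3^{k-1}-3}{8}-\frac{3^{k-2}-9}{8}\ (k\text{ even})$$ times. Moreover $S_{SF}(N)\big/\tfrac{3^N-1}{2}\to\tfrac34$ as $N\to\infty$.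
   Context: Magnetic Tower of Hanoi rules: there are three posts and disks of distinct diameters, each disk having one Red face and one Blue face. A move consists of lifting the top disk of some post, turning it upside down, and placing it on top of another post. (Size rule) a disk may never be placed on a smaller disk; (Magnet rule) a disk may never be placed so that its downward-facing side has the same color as the upward-facing side of the disk it lands on. In the SemiFree setting the posts $S$ and $D$ are permanently and oppositely colored (as if they sit on top of larger disks showing Red and Blue respectively), so any disk on $S$ must show Red upward and any disk on $D$ must show Blue upward, while the third post $I$ starts empty and neutral and may hold disks in either orientation subject to the rules above. *)

theory Defs
  imports Complex_Main
begin

text \<open>Disks are numbered 1..N from largest to smallest, so disk k is smaller than
  disk k' iff k' < k.  A disk on a post is recorded with the colour of its
  upward-facing side; each post holds a list of disks, top disk first.\<close>

datatype color = Red | Blue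

fun flip :: "color \<Rightarrow> color" where
  "flip Red = Blue" | "flip Blue = Red"

datatype post = S | D | I

type_synonym state = "post \<Rightarrow> (nat \<times> color) list"

text \<open>Colour shown upward by the (virtual) base of an empty post:
  S behaves as if sitting on a disk showing Red, D on one showing Blue,
  I is neutral.\<close>
fun base_color :: "post \<Rightarrow> color option" where
  "base_color S = Some Red" | "base_color D = Some Blue" | "base_color I = None"

definition legal_move :: "state \<Rightarrow> post \<times> post \<Rightarrow> bool" where
  "legal_move st m = (case m of (p, q) \<Rightarrow>
     p \<noteq> q \<and> st p \<noteq> [] \<and>
     (case hd (st p) of (k, c) \<Rightarrow>
        \<comment> \<open>after flipping, the downward face of the moved disk shows c\<close>
        (case st q of
           [] \<Rightarrow> base_color q \<noteq> Some c
         | (k', c') # _ \<Rightarrow> k' < k \<and> c' \<noteq> c)))"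

definition do_move :: "state \<Rightarrow> post \<times> post \<Rightarrow> state" where
  "do_move st m = (case m of (p, q) \<Rightarrow>
     st(p := tl (st p), q := (case hd (st p) of (k, c) \<Rightarrow> (k, flip c)) # st q))"

fun valid_run :: "state \<Rightarrow> (post \<times> post) list \<Rightarrow> state \<Rightarrow> bool" where
  "valid_run st [] st' = (st' = st)"
| "valid_run st (m # ms) st' = (legal_move st m \<and> valid_run (do_move st m) ms st')"

fun disk_moves :: "state \<Rightarrow> (post \<times> post) list \<Rightarrow> nat \<Rightarrow> nat" where
  "disk_moves st [] k = 0"
| "disk_moves st (m # ms) k =
     (if fst (hd (st (fst m))) = k then 1 else 0) + disk_moves (do_move st m) ms k"

definition init_state :: "nat \<Rightarrow> state" where
  "init_state N = (\<lambda>p. if p = S then map (\<lambda>k. (k, Red)) (rev [1..<N+1]) else [])"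

definition final_state :: "nat \<Rightarrow> state" where
  "final_state N = (\<lambda>p. if p = D then map (\<lambda>k. (k, Blue)) (rev [1..<N+1]) else [])"

definition S_SF :: "nat \<Rightarrow> real" where
  "S_SF N = (if odd N
     then (3 ^ (N - 1) + real N - 1) + (3 ^ (N - 1) - 1) / 8 - (real N - 1) / 2
     else (3 ^ (N - 1) + real N - 1) + (3 ^ (N - 1) - 3) / 8 - (real N - 2) / 2)"

definition P_SF :: "nat \<Rightarrow> real" where
  "P_SF k = (if odd k
     then 2 * 3 powi (int k - 2) + (3 powi (int k - 1) - 9) / 8 - (3 powi (int k - 2) - 3) / 8 + 1
     else 2 * 3 powi (int k - 2) + (3 powi (int k - 1) - 3) / 8 - (3 powi (int k - 2) - 9) / 8)"

end

theory Submission
  imports Defs "HOL-Library.Function_Algebras"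
begin

text \<open>The solution is built recursively: to move \<open>n + 1\<close> disks from \<open>S\<close> to \<open>D\<close>, move the
  top \<open>n\<close> disks to \<open>I\<close> keeping them Red up, move the largest disk to \<open>D\<close>, and bring the
  \<open>n\<close> disks from \<open>I\<close> to \<open>D\<close>, which starts by parking the top \<open>n - 1\<close> of them on \<open>S\<close>.
  Every other phase is a transfer in which all disks on one post show one colour and all
  disks on the two other posts the opposite colour; there the disk at depth \<open>j\<close> of the moving
  tower moves \<open>3^j\<close> times if the odd post is an endpoint and \<open>2 \<cdot> 3^j\<close> times otherwise.
  Adding up, the disk at depth \<open>j\<close> of the whole tower moves \<open>a_j\<close> times with \<open>a_0 = 1\<close>,
  \<open>a_1 = 3\<close>, \<open>a_(j+2) = a_j + 2 \<cdot> 3^(j+1)\<close>, i.e. \<open>a_j = (3^(j+1) + 2 - (-1)^j) / 4 = P_SF (j + 1)\<close>;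
  the partial sums are \<open>S_SF N = (3^(N+1) + 4N - 4 + (-1)^N) / 8\<close>, and the limit is read off.\<close>

section \<open>Runs and towers\<close>

lemma flip_flip [simp]: "flip (flip c) = c"
  by (cases c) auto

lemma flip_neq [simp]: "flip c \<noteq> c" "c \<noteq> flip c"
  by (cases c; simp)+

fun top_color :: "post \<Rightarrow> (nat \<times> color) list \<Rightarrow> color option" where
  "top_color q [] = base_color q"
| "top_color q ((_, c) # _) = Some c"

text \<open>\<open>fits k d q xs\<close>: disk \<open>k\<close>, whose face \<open>d\<close> will point downwards after the move,
  may be put on the stack \<open>xs\<close> of post \<open>q\<close>.\<close>

definition fits :: "nat \<Rightarrow> color \<Rightarrow> post \<Rightarrow> (nat \<times> color) list \<Rightarrow> bool" where
  "fits k d q xs \<longleftrightarrow> (\<forall>a \<in> set xs. fst a < k) \<and> top_color q xs \<noteq> Some d"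

lemma fits_Suc: "fits k d q xs \<Longrightarrow> fits (Suc k) d q xs"
  by (auto simp: fits_def less_SucI)

lemma fits_push: "fits k d' q xs \<Longrightarrow> e \<noteq> d \<Longrightarrow> fits (Suc k) d q ((k, e) # xs)"
  by (auto simp: fits_def less_SucI)

definition run_counts :: "state \<Rightarrow> (post \<times> post) list \<Rightarrow> state \<Rightarrow> (nat \<Rightarrow> nat) \<Rightarrow> bool" where
  "run_counts st ms st' f \<longleftrightarrow> valid_run st ms st' \<and> disk_moves st ms = f"

lemma run_counts_Nil: "run_counts st [] st 0"
  by (simp add: run_counts_def fun_eq_iff)

lemma valid_run_append:
  "valid_run st xs st1 \<Longrightarrow> valid_run st (xs @ ys) st2 = valid_run st1 ys st2"
  by (induction xs arbitrary: st) auto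

lemma disk_moves_append:
  "valid_run st xs st1 \<Longrightarrow> disk_moves st (xs @ ys) i = disk_moves st xs i + disk_moves st1 ys i"
  by (induction xs arbitrary: st) auto

lemma run_counts_append:
  "run_counts st xs st1 f \<Longrightarrow> run_counts st1 ys st2 g \<Longrightarrow> run_counts st (xs @ ys) st2 (f + g)"
  by (auto simp: run_counts_def fun_eq_iff valid_run_append disk_moves_append)

lemma length_eq_sum_disk_moves:
  assumes "valid_run st ms st'" and "\<forall>p. \<forall>a \<in> set (st p). fst a \<in> A" and "finite A"
  shows "length ms = (\<Sum>i\<in>A. disk_moves st ms i)"
  using assms
proof (induction ms arbitrary: st)
  case Nil
  then show ?case by simp
next
  case (Cons m ms)
  obtain p q where m: "m = (p, q)" by (cases m)
  have "st p \<noteq> []" and run: "valid_run (do_move st m) ms st'"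
    using Cons.prems(1) m by (simp_all add: legal_move_def)
  then have top: "fst (hd (st p)) \<in> A"
    using Cons.prems(2) by (meson list.set_sel(1))
  have "\<forall>p'. \<forall>a \<in> set (do_move st m p'). fst a \<in> A"
    using Cons.prems(2) top \<open>st p \<noteq> []\<close>
    by (auto simp: do_move_def m split: prod.splits dest: list.set_sel(2))
  then have "length ms = (\<Sum>i\<in>A. disk_moves (do_move st m) ms i)"
    using Cons.IH run Cons.prems(3) by blast
  then show ?case
    using top Cons.prems(3) by (simp add: m sum.distrib)
qed

definition tower :: "nat \<Rightarrow> nat \<Rightarrow> color \<Rightarrow> (nat \<times> color) list" where
  "tower k n c = map (\<lambda>i. (i, c)) (rev [k..<k+n])"

lemma tower_0 [simp]: "tower k 0 c = []"
  by (simp add: tower_def)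

lemma tower_Suc: "tower k (Suc n) c = tower (Suc k) n c @ [(k, c)]"
  by (simp add: tower_def upt_rec)

definition tower_count :: "nat \<Rightarrow> nat \<Rightarrow> (nat \<Rightarrow> nat) \<Rightarrow> nat \<Rightarrow> nat" where
  "tower_count k n f i = (if k \<le> i \<and> i < k + n then f (i - k) else 0)"

lemma tower_count_0 [simp]: "tower_count k 0 f = 0"
  by (simp add: tower_count_def fun_eq_iff)

lemma tower_count_case_nat:
  "tower_count k (Suc n) (case_nat a f) = tower_count k 1 (\<lambda>_. a) + tower_count (Suc k) n f"
proof (rule ext)
  fix i
  show "tower_count k (Suc n) (case_nat a f) i = (tower_count k 1 (\<lambda>_. a) + tower_count (Suc k) n f) i"
  proof (cases "k < i")
    case True
    then obtain j where "i = Suc (k + j)"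
      using less_iff_Suc_add by auto
    then show ?thesis by (simp add: tower_count_def)
  qed (auto simp: tower_count_def)
qed

lemma tower_count_add: "tower_count k n f + tower_count k n g = tower_count k n (f + g)"
  by (simp add: tower_count_def fun_eq_iff)

lemma tower_count_via:
  "tower_count (Suc k) n f1 + (tower_count k 1 (\<lambda>_. 1) + (tower_count (Suc k) n f2
     + (tower_count k 1 (\<lambda>_. 1) + tower_count (Suc k) n f3)))
   = tower_count k (Suc n) (case_nat 2 (f1 + f2 + f3))"
proof -
  have two: "tower_count k 1 (\<lambda>_. 1) + tower_count k 1 (\<lambda>_. 1) = tower_count k 1 (\<lambda>_. 2)"
    by (simp add: tower_count_def fun_eq_iff)
  show ?thesis
    unfolding tower_count_case_nat tower_count_add[symmetric] two[symmetric] by (simp add: ac_simps)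
qed

lemma run_counts_move:
  assumes "p \<noteq> q" and "st p = (k, c) # xs" and "fits k c q (st q)"
  shows "run_counts st [(p, q)] (st(p := xs, q := (k, flip c) # st q)) (tower_count k 1 (\<lambda>_. 1))"
proof -
  have "legal_move st (p, q)"
    using assms by (cases "st q") (auto simp: legal_move_def fits_def)
  moreover have "do_move st (p, q) = st(p := xs, q := (k, flip c) # st q)"
    using assms by (simp add: do_move_def)
  ultimately show ?thesis
    using assms by (auto simp: run_counts_def tower_count_def fun_eq_iff)
qed

text \<open>The tower lies on \<open>b\<close>, so \<open>st(x := b)\<close> is the arrangement of all other disks. Requiring
  the run to work over every arrangement admitted by \<open>base\<close> is what makes the notion
  compositional.\<close>

definition moves_tower ::
    "(nat \<Rightarrow> state \<Rightarrow> bool) \<Rightarrow> nat \<Rightarrow> post \<Rightarrow> color \<Rightarrow> post \<Rightarrow> color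
      \<Rightarrow> (post \<times> post) list \<Rightarrow> (nat \<Rightarrow> nat) \<Rightarrow> bool" where
  "moves_tower base n x cx y cy ms f \<longleftrightarrow>
     (\<forall>st b k. st x = tower k n cx @ b \<longrightarrow> base k (st(x := b)) \<longrightarrow>
        run_counts st ms (st(x := b, y := tower k n cy @ st y)) (tower_count k n f))"

lemma moves_towerD:
  "moves_tower base n x cx y cy ms f \<Longrightarrow> st x = tower k n cx @ b \<Longrightarrow> base k (st(x := b))
   \<Longrightarrow> run_counts st ms (st(x := b, y := tower k n cy @ st y)) (tower_count k n f)"
  by (simp add: moves_tower_def)

lemma moves_tower_0: "moves_tower base 0 x cx y cy [] f"
proof -
  have "st(x := b, y := tower k 0 cy @ st y) = st" if "st x = tower k 0 cx @ b" for st :: state and k b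
    using that by (simp add: fun_eq_iff)
  then show ?thesis
    by (auto simp: moves_tower_def run_counts_Nil)
qed

lemma moves_tower_direct:
  assumes "x \<noteq> y" "w \<noteq> x" "w \<noteq> y" and cy: "cy = flip cx"
    and run1: "moves_tower P n x cx w cw ms1 f1"
    and run2: "moves_tower Q n w cw y cy ms2 f2"
    and base_P: "\<And>k B. base k B \<Longrightarrow> P (Suc k) (B(x := (k, cx) # B x))"
    and base_fits: "\<And>k B. base k B \<Longrightarrow> fits k cx y (B y)"
    and base_Q: "\<And>k B. base k B \<Longrightarrow> Q (Suc k) (B(y := (k, cy) # B y))"
  shows "moves_tower base (Suc n) x cx y cy (ms1 @ [(x, y)] @ ms2) (case_nat 1 (f1 + f2))"
  unfolding moves_tower_def
proof (intro allI impI)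
  fix st b k
  assume start: "st x = tower k (Suc n) cx @ b" and base: "base k (st(x := b))"
  define st1 where "st1 = st(x := (k, cx) # b, w := tower (Suc k) n cw @ st w)"
  define st2 where "st2 = st1(x := b, y := (k, flip cx) # st1 y)"
  have r1: "run_counts st ms1 st1 (tower_count (Suc k) n f1)"
    unfolding st1_def
    by (rule moves_towerD[OF run1]) (use start base_P[OF base] in \<open>simp_all add: tower_Suc\<close>)
  have r2: "run_counts st1 [(x, y)] st2 (tower_count k 1 (\<lambda>_. 1))"
    unfolding st2_def
    by (rule run_counts_move) (use assms(1-3) base_fits[OF base] in \<open>simp_all add: st1_def\<close>)
  have "st2(w := st w) = (st(x := b))(y := (k, cy) # (st(x := b)) y)"
    using assms(1-4) by (auto simp: st1_def st2_def fun_eq_iff)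
  then have "run_counts st2 ms2 (st2(w := st w, y := tower (Suc k) n cy @ st2 y))
      (tower_count (Suc k) n f2)"
    using moves_towerD[OF run2, of st2 "Suc k" "st w"] base_Q[OF base] assms(1-3)
    by (simp add: st1_def st2_def)
  moreover have "st2(w := st w, y := tower (Suc k) n cy @ st2 y)
      = st(x := b, y := tower k (Suc n) cy @ st y)"
    using assms(1-4) by (auto simp: st1_def st2_def tower_Suc fun_eq_iff)
  ultimately have r3: "run_counts st2 ms2 (st(x := b, y := tower k (Suc n) cy @ st y))
      (tower_count (Suc k) n f2)"
    by simp
  have "tower_count (Suc k) n f1 + (tower_count k 1 (\<lambda>_. 1) + tower_count (Suc k) n f2)
      = tower_count k (Suc n) (case_nat 1 (f1 + f2))"
    unfolding tower_count_case_nat tower_count_add[symmetric] by (rule add.left_commute)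
  then show "run_counts st (ms1 @ [(x, y)] @ ms2) (st(x := b, y := tower k (Suc n) cy @ st y))
      (tower_count k (Suc n) (case_nat 1 (f1 + f2)))"
    using run_counts_append[OF r1 run_counts_append[OF r2 r3]] by (simp only:)
qed

text \<open>The bottom disk travels \<open>x \<rightarrow> c \<rightarrow> y\<close> (so it arrives with its original face up) while
  the smaller disks shuttle \<open>x \<rightarrow> y \<rightarrow> x \<rightarrow> y\<close>.\<close>

lemma moves_tower_via:
  assumes "x \<noteq> y" "c \<noteq> x" "c \<noteq> y"
    and run1: "moves_tower P n x cx y cy ms1 f1"
    and run2: "moves_tower Q n y cy x cx ms2 f2"
    and run3: "moves_tower R n x cx y cx ms3 f3"
    and base_P: "\<And>k B. base k B \<Longrightarrow> P (Suc k) (B(x := (k, cx) # B x))"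
    and base_fits_c: "\<And>k B. base k B \<Longrightarrow> fits k cx c (B c)"
    and base_Q: "\<And>k B. base k B \<Longrightarrow> Q (Suc k) (B(c := (k, flip cx) # B c))"
    and base_fits_y: "\<And>k B. base k B \<Longrightarrow> fits k (flip cx) y (B y)"
    and base_R: "\<And>k B. base k B \<Longrightarrow> R (Suc k) (B(y := (k, cx) # B y))"
  shows "moves_tower base (Suc n) x cx y cx (ms1 @ [(x, c)] @ ms2 @ [(c, y)] @ ms3)
           (case_nat 2 (f1 + f2 + f3))"
  unfolding moves_tower_def
proof (intro allI impI)
  fix st b k
  assume start: "st x = tower k (Suc n) cx @ b" and base: "base k (st(x := b))"
  define st1 where "st1 = st(x := (k, cx) # b, y := tower (Suc k) n cy @ st y)"
  define st2 where "st2 = st1(x := b, c := (k, flip cx) # st1 c)"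
  define st3 where "st3 = st2(y := st y, x := tower (Suc k) n cx @ st2 x)"
  define st4 where "st4 = st3(c := st c, y := (k, flip (flip cx)) # st3 y)"
  have r1: "run_counts st ms1 st1 (tower_count (Suc k) n f1)"
    unfolding st1_def
    by (rule moves_towerD[OF run1]) (use start base_P[OF base] in \<open>simp_all add: tower_Suc\<close>)
  have r2: "run_counts st1 [(x, c)] st2 (tower_count k 1 (\<lambda>_. 1))"
    unfolding st2_def
    by (rule run_counts_move) (use assms(1-3) base_fits_c[OF base] in \<open>simp_all add: st1_def\<close>)
  have "st2(y := st y) = (st(x := b))(c := (k, flip cx) # (st(x := b)) c)"
    using assms(1-3) by (auto simp: st1_def st2_def fun_eq_iff)
  then have r3: "run_counts st2 ms2 st3 (tower_count (Suc k) n f2)"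
    unfolding st3_def
    using moves_towerD[OF run2, of st2 "Suc k" "st y"] base_Q[OF base] assms(1-3)
    by (simp add: st1_def st2_def)
  have r4: "run_counts st3 [(c, y)] st4 (tower_count k 1 (\<lambda>_. 1))"
    unfolding st4_def
    by (rule run_counts_move)
      (use assms(1-3) base_fits_y[OF base] in \<open>simp_all add: st1_def st2_def st3_def\<close>)
  have "st4(x := b) = (st(x := b))(y := (k, cx) # (st(x := b)) y)"
    using assms(1-3) by (auto simp: st1_def st2_def st3_def st4_def fun_eq_iff)
  then have "run_counts st4 ms3 (st4(x := b, y := tower (Suc k) n cx @ st4 y))
      (tower_count (Suc k) n f3)"
    using moves_towerD[OF run3, of st4 "Suc k" b] base_R[OF base] assms(1-3)
    by (simp add: st1_def st2_def st3_def st4_def)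
  moreover have "st4(x := b, y := tower (Suc k) n cx @ st4 y)
      = st(x := b, y := tower k (Suc n) cx @ st y)"
    using assms(1-3) by (auto simp: st1_def st2_def st3_def st4_def tower_Suc fun_eq_iff)
  ultimately have r5: "run_counts st4 ms3 (st(x := b, y := tower k (Suc n) cx @ st y))
      (tower_count (Suc k) n f3)"
    by simp
  show "run_counts st (ms1 @ [(x, c)] @ ms2 @ [(c, y)] @ ms3)
      (st(x := b, y := tower k (Suc n) cx @ st y)) (tower_count k (Suc n) (case_nat 2 (f1 + f2 + f3)))"
    using run_counts_append[OF r1 run_counts_append[OF r2 run_counts_append[OF r3
        run_counts_append[OF r4 r5]]]]
    by (simp only: tower_count_via)
qed

section \<open>Colored transfers\<close>

fun third :: "post \<Rightarrow> post \<Rightarrow> post" where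
  "third S D = I" | "third D S = I" | "third S I = D" | "third I S = D"
| "third D I = S" | "third I D = S" | "third S S = S" | "third D D = D" | "third I I = I"

lemma third_neq:
  assumes "x \<noteq> y" shows "third x y \<noteq> x" and "third x y \<noteq> y"
  using assms by (cases x; cases y; simp)+

definition post_color :: "post \<Rightarrow> color \<Rightarrow> post \<Rightarrow> color" where
  "post_color c g p = (if p = c then g else flip g)"

text \<open>Transfers in which every disk on post \<open>c\<close> shows \<open>g\<close> and every disk on the two other
  posts shows \<open>flip g\<close>. A disk moving between the two equally coloured posts has to stop on
  \<open>c\<close>.\<close>

fun colored_transfer :: "nat \<Rightarrow> post \<Rightarrow> post \<Rightarrow> post \<Rightarrow> (post \<times> post) list" where
  "colored_transfer 0 c x y = []"
| "colored_transfer (Suc n) c x y = (if x = c \<or> y = c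
     then colored_transfer n c x (third x y) @ [(x, y)] @ colored_transfer n c (third x y) y
     else colored_transfer n c x y @ [(x, c)] @ colored_transfer n c y x @ [(c, y)]
          @ colored_transfer n c x y)"

definition colored_count :: "post \<Rightarrow> post \<Rightarrow> post \<Rightarrow> nat \<Rightarrow> nat" where
  "colored_count c x y j = (if x = c \<or> y = c then 3 ^ j else 2 * 3 ^ j)"

definition colored_base :: "post \<Rightarrow> color \<Rightarrow> nat \<Rightarrow> state \<Rightarrow> bool" where
  "colored_base c g k st \<longleftrightarrow> (\<forall>p. fits k (flip (post_color c g p)) p (st p))"

lemma colored_base_push:
  "colored_base c g k st \<Longrightarrow> colored_base c g (Suc k) (st(p := (k, post_color c g p) # st p))"
  by (auto simp: colored_base_def intro: fits_push fits_Suc)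

lemma colored_base_fits:
  "colored_base c g k st \<Longrightarrow> fits k (flip (post_color c g p)) p (st p)"
  by (simp add: colored_base_def)

lemma colored_count_adjacent:
  assumes "x \<noteq> y" "x = c \<or> y = c"
  shows "colored_count c x y
           = case_nat 1 (colored_count c x (third x y) + colored_count c (third x y) y)"
  using assms third_neq[OF assms(1)]
  by (auto simp: colored_count_def fun_eq_iff split: nat.split)

lemma colored_count_far:
  assumes "c \<noteq> x" "c \<noteq> y"
  shows "colored_count c x y
           = case_nat 2 (colored_count c x y + colored_count c y x + colored_count c x y)"
  using assms by (auto simp: colored_count_def fun_eq_iff split: nat.split)

lemma colored_transfer_moves_tower:
  "x \<noteq> y \<Longrightarrow> moves_tower (colored_base c g) n x (post_color c g x) y (post_color c g y)
     (colored_transfer n c x y) (colored_count c x y)"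
proof (induction n arbitrary: x y)
  case 0
  show ?case by (simp add: moves_tower_0)
next
  case (Suc n)
  let ?col = "post_color c g"
  show ?case
  proof (cases "x = c \<or> y = c")
    case True
    define w where "w = third x y"
    have w: "w \<noteq> x" "w \<noteq> y"
      using third_neq[OF Suc.prems] by (simp_all add: w_def)
    have cy: "?col y = flip (?col x)"
      using True Suc.prems by (auto simp: post_color_def)
    have "moves_tower (colored_base c g) (Suc n) x (?col x) y (?col y)
        (colored_transfer n c x w @ [(x, y)] @ colored_transfer n c w y)
        (case_nat 1 (colored_count c x w + colored_count c w y))"
      by (rule moves_tower_direct[OF Suc.prems w cy Suc.IH[OF w(1)[symmetric]] Suc.IH[OF w(2)]
            colored_base_push _ colored_base_push])
        (assumption, metis colored_base_fits flip_flip cy, assumption)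
    then show ?thesis
      using True colored_count_adjacent[OF Suc.prems True] by (simp add: w_def)
  next
    case False
    then have c: "c \<noteq> x" "c \<noteq> y"
      by auto
    then have cols: "?col y = ?col x" "?col c = flip (?col x)"
      by (auto simp: post_color_def)
    have run_xy: "moves_tower (colored_base c g) n x (?col x) y (?col x)
        (colored_transfer n c x y) (colored_count c x y)"
      using Suc.IH[OF Suc.prems] cols by simp
    have run_yx: "moves_tower (colored_base c g) n y (?col x) x (?col x)
        (colored_transfer n c y x) (colored_count c y x)"
      using Suc.IH[of y x] Suc.prems cols by simp
    have "moves_tower (colored_base c g) (Suc n) x (?col x) y (?col x)
        (colored_transfer n c x y @ [(x, c)] @ colored_transfer n c y x @ [(c, y)]
          @ colored_transfer n c x y)
        (case_nat 2 (colored_count c x y + colored_count c y x + colored_count c x y))"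
      by (rule moves_tower_via[OF Suc.prems c run_xy run_yx run_xy])
        (use colored_base_push[of c g _ _ x] colored_base_push[of c g _ _ c, unfolded cols]
          colored_base_push[of c g _ _ y, unfolded cols] colored_base_fits[of c g _ _ c, unfolded cols]
          colored_base_fits[of c g _ _ y, unfolded cols] in auto)
    then show ?thesis
      using False cols colored_count_far[OF c] by simp
  qed
qed

section \<open>The SemiFree solution\<close>

definition semifree_base :: "nat \<Rightarrow> state \<Rightarrow> bool" where
  "semifree_base k st \<longleftrightarrow> st I = [] \<and> fits k Blue S (st S) \<and> fits k Red D (st D)"

lemma all_post: "(\<forall>p. P p) \<longleftrightarrow> P S \<and> P D \<and> P I"
  by (metis post.exhaust)

lemma colored_base_iff:
  "colored_base c g k st \<longleftrightarrow> fits k (flip (post_color c g S)) S (st S)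
     \<and> fits k (flip (post_color c g D)) D (st D) \<and> fits k (flip (post_color c g I)) I (st I)"
  by (simp add: colored_base_def all_post)

text \<open>Moving a Red-up tower from \<open>S\<close> onto the empty post \<open>I\<close> keeping it Red up: the largest disk
  must move an even number of times, so it goes \<open>S \<rightarrow> D \<rightarrow> I\<close>.\<close>

fun semifree_to_I :: "nat \<Rightarrow> (post \<times> post) list" where
  "semifree_to_I 0 = []"
| "semifree_to_I (Suc n) = colored_transfer n S S I @ [(S, D)] @ colored_transfer n S I S @ [(D, I)]
     @ colored_transfer n D S I"

fun semifree_solution :: "nat \<Rightarrow> (post \<times> post) list"
  and semifree_from_I :: "nat \<Rightarrow> (post \<times> post) list" where
  "semifree_solution 0 = []"
| "semifree_solution (Suc n) = semifree_to_I n @ [(S, D)] @ semifree_from_I n"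
| "semifree_from_I 0 = []"
| "semifree_from_I (Suc n) = colored_transfer n D I S @ [(I, D)] @ semifree_solution n"

definition to_I_count :: "nat \<Rightarrow> nat" where
  "to_I_count = case_nat 2 (\<lambda>j. 4 * 3 ^ j)"

fun semifree_count :: "nat \<Rightarrow> nat" where
  "semifree_count 0 = 1"
| "semifree_count (Suc 0) = 3"
| "semifree_count (Suc (Suc j)) = 2 * 3 ^ Suc j + semifree_count j"

definition from_I_count :: "nat \<Rightarrow> nat" where
  "from_I_count = case_nat 1 (\<lambda>j. 2 * 3 ^ j + semifree_count j)"

lemma semifree_count_case_nat: "semifree_count = case_nat 1 (to_I_count + from_I_count)"
proof
  fix j
  show "semifree_count j = case_nat 1 (to_I_count + from_I_count) j"
    by (cases j rule: semifree_count.cases) (simp_all add: to_I_count_def from_I_count_def)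
qed

lemma semifree_to_I_moves_tower: "moves_tower semifree_base n S Red I Red (semifree_to_I n) to_I_count"
proof (cases n)
  case 0
  then show ?thesis by (simp add: moves_tower_0)
next
  case (Suc m)
  have "moves_tower semifree_base (Suc m) S Red I Red (semifree_to_I (Suc m))
      (case_nat 2 (colored_count S S I + colored_count S I S + colored_count D S I))"
    unfolding semifree_to_I.simps
  proof (rule moves_tower_via[where P = "colored_base S Red" and Q = "colored_base S Red"
        and R = "colored_base D Blue"])
    show "moves_tower (colored_base S Red) m S Red I Blue (colored_transfer m S S I) (colored_count S S I)"
      using colored_transfer_moves_tower[of S I S Red m] by (simp add: post_color_def)
    show "moves_tower (colored_base S Red) m I Blue S Red (colored_transfer m S I S) (colored_count S I S)"
      using colored_transfer_moves_tower[of I S S Red m] by (simp add: post_color_def)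
    show "moves_tower (colored_base D Blue) m S Red I Red (colored_transfer m D S I) (colored_count D S I)"
      using colored_transfer_moves_tower[of S I D Blue m] by (simp add: post_color_def)
  qed (auto simp: semifree_base_def colored_base_iff post_color_def fits_def less_SucI)
  moreover have "case_nat 2 (colored_count S S I + colored_count S I S + colored_count D S I) = to_I_count"
    by (auto simp: to_I_count_def colored_count_def fun_eq_iff split: nat.split)
  ultimately show ?thesis
    using Suc by simp
qed

lemma semifree_moves_tower:
  "moves_tower semifree_base n S Red D Blue (semifree_solution n) semifree_count
   \<and> moves_tower semifree_base n I Red D Blue (semifree_from_I n) from_I_count"
proof (induction n)
  case 0
  then show ?case by (simp add: moves_tower_0)
next
  case (Suc n)
  have "moves_tower semifree_base (Suc n) S Red D Blue (semifree_solution (Suc n))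
      (case_nat 1 (to_I_count + from_I_count))"
    unfolding semifree_solution.simps
    by (rule moves_tower_direct[OF _ _ _ _ semifree_to_I_moves_tower conjunct2[OF Suc.IH]])
      (auto simp: semifree_base_def fits_def less_SucI)
  moreover have "moves_tower semifree_base (Suc n) I Red D Blue (semifree_from_I (Suc n))
      (case_nat 1 (colored_count D I S + semifree_count))"
    unfolding semifree_from_I.simps
  proof (rule moves_tower_direct[OF _ _ _ _ _ conjunct1[OF Suc.IH]])
    show "moves_tower (colored_base D Blue) n I Red S Red (colored_transfer n D I S) (colored_count D I S)"
      using colored_transfer_moves_tower[of I S D Blue n] by (simp add: post_color_def)
  qed (auto simp: semifree_base_def colored_base_iff post_color_def fits_def less_SucI)
  moreover have "case_nat 1 (colored_count D I S + semifree_count) = from_I_count"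
    by (auto simp: from_I_count_def colored_count_def fun_eq_iff split: nat.split)
  ultimately show ?case
    by (simp add: semifree_count_case_nat)
qed

lemma semifree_solution_run:
  "run_counts (init_state N) (semifree_solution N) (final_state N) (tower_count 1 N semifree_count)"
proof -
  have "init_state N S = tower 1 N Red @ []" "semifree_base 1 ((init_state N)(S := []))"
    by (simp_all add: init_state_def tower_def semifree_base_def fits_def)
  moreover have "(init_state N)(S := [], D := tower 1 N Blue @ init_state N D) = final_state N"
    by (auto simp: init_state_def final_state_def tower_def fun_eq_iff)
  ultimately show ?thesis
    using moves_towerD[OF conjunct1[OF semifree_moves_tower]] by metis
qed

section \<open>Counting moves\<close>

lemma semifree_count_closed_form: "real (semifree_count j) = (3 ^ (j + 1) + 2 + (-1) ^ (j + 1)) / 4"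
  by (induction j rule: semifree_count.induct) (simp_all add: field_simps)

lemma P_SF_eq_semifree_count:
  assumes "k \<ge> 1"
  shows "P_SF k = real (semifree_count (k - 1))"
proof (cases "k = 1")
  case True
  then show ?thesis by (simp add: P_SF_def power_int_minus)
next
  case False
  then have "k \<ge> 2"
    using assms by simp
  then obtain j where k: "k = j + 2"
    using le_Suc_ex by (metis add.commute)
  have "int k - 2 = int j" "int k - 1 = int (j + 1)"
    using k by simp_all
  then have "(3::real) powi (int k - 2) = 3 ^ j" "(3::real) powi (int k - 1) = 3 ^ (j + 1)"
    by (simp_all only: power_int_of_nat)
  then show ?thesis
    using k by (cases "even j") (simp_all add: P_SF_def semifree_count_closed_form field_simps)
qed

lemma sum_semifree_count: "(\<Sum>j<N. real (semifree_count j)) = (3 ^ (N + 1) - 3 + 4 * real N + (-1) ^ N - 1) / 8"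
  by (induction N) (simp_all add: semifree_count_closed_form field_simps)

lemma S_SF_closed_form: "N \<ge> 1 \<Longrightarrow> S_SF N = (3 ^ (N + 1) - 3 + 4 * real N + (-1) ^ N - 1) / 8"
proof -
  assume "N \<ge> 1"
  then obtain j where N: "N = Suc j"
    using not0_implies_Suc by fastforce
  show ?thesis
    by (cases "even j") (simp_all add: S_SF_def N field_simps)
qed

lemma S_SF_ratio_eq:
  assumes "N \<ge> 1"
  shows "S_SF N / ((3 ^ N - 1) / 2)
    = 3 / 4 + (4 * (real N / 3 ^ N) + (- 1 / 3) ^ N - (1 / 3) ^ N) / (4 * (1 - (1 / 3) ^ N))"
proof -
  have "(3::real) ^ N > 1"
    using assms by (simp add: one_less_power)
  moreover have "(- 1 / 3 :: real) ^ N = (- 1) ^ N / 3 ^ N" "(1 / 3 :: real) ^ N = 1 / 3 ^ N"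
    by (metis minus_divide_left power_divide, simp add: power_divide)
  ultimately show ?thesis
    unfolding S_SF_closed_form[OF assms] by (simp add: field_simps)
qed

lemma S_SF_ratio_limit: "(\<lambda>N. S_SF N / ((3 ^ N - 1) / 2)) \<longlonglongrightarrow> 3 / 4"
proof -
  have "(\<lambda>N. 3 / 4 + (4 * (real N / 3 ^ N) + (- 1 / 3) ^ N - (1 / 3) ^ N) / (4 * (1 - (1 / 3) ^ N)))
      \<longlonglongrightarrow> 3 / 4 + (4 * 0 + 0 - 0) / (4 * (1 - 0))"
    by (intro tendsto_intros lim_n_over_pown) simp_all
  moreover have "\<forall>\<^sub>F N in sequentially.
      3 / 4 + (4 * (real N / 3 ^ N) + (- 1 / 3) ^ N - (1 / 3) ^ N) / (4 * (1 - (1 / 3) ^ N))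
      = S_SF N / ((3 ^ N - 1) / 2)"
    using S_SF_ratio_eq by (auto intro: eventually_sequentiallyI[of 1])
  ultimately show ?thesis
    by (simp add: Lim_transform_eventually)
qed

theorem mainTheorem3:
  shows "(\<forall>N::nat. N \<ge> 1 \<longrightarrow>
            (\<exists>ms. valid_run (init_state N) ms (final_state N)
                 \<and> real (length ms) = S_SF N
                 \<and> (\<forall>k \<in> {1..N}. real (disk_moves (init_state N) ms k) = P_SF k)))
         \<and> (\<lambda>N. S_SF N / ((3 ^ N - 1) / 2)) \<longlonglongrightarrow> 3 / 4"
proof (intro conjI allI impI exI)
  fix N :: nat
  assume N: "N \<ge> 1"
  have run: "valid_run (init_state N) (semifree_solution N) (final_state N)"
    and moves: "disk_moves (init_state N) (semifree_solution N) = tower_count 1 N semifree_count"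
    using semifree_solution_run by (simp_all add: run_counts_def)
  from run show "valid_run (init_state N) (semifree_solution N) (final_state N)" .
  show "\<forall>k \<in> {1..N}. real (disk_moves (init_state N) (semifree_solution N) k) = P_SF k"
    by (simp add: moves tower_count_def P_SF_eq_semifree_count)
  have "length (semifree_solution N) = (\<Sum>i\<in>{1..N}. disk_moves (init_state N) (semifree_solution N) i)"
    by (rule length_eq_sum_disk_moves[OF run]) (auto simp: init_state_def)
  also have "\<dots> = (\<Sum>j<N. semifree_count j)"
    by (simp add: moves tower_count_def sum.atLeast1_atMost_eq)
  finally show "real (length (semifree_solution N)) = S_SF N"
    using sum_semifree_count[of N] S_SF_closed_form[OF N] by simp
qed (rule S_SF_ratio_limit)

end
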